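(* Suppose $(X,\tau)$ is a Choquet space, $B\subseteq\mathcal{P}(X)$ is a base for $\tau$ closed under finite intersections, and $B_{0}\subseteq B$. Then there exists $B_{1}$ with $B_{0}\subseteq B_{1}\subseteq B$, $|B_{1}|\leq|B_{0}|+\aleph_{0}$, such that $(X,\tau_{B_{1}})$ is Choquet, where $\tau_{B_{1}}$ is the topology generated by $B_{1}$.
   Context: The Choquet game on a space $X$: in round $n$ player A chooses a non-empty open $U_{n}\subseteq V_{n-1}$ (with $V_{-1}=X$) and player B chooses a non-empty open $V_{n}\subseteq U_{n}$; B wins if $\bigcap_{n}V_{n}\neq\emptyset$. $X$ is a Choquet space if B has a winning strategy. *)

theory Defs
  imports "HOL-Analysis.Analysis"
begin

definition is_base_for :: "'a topology \<Rightarrow> 'a set set \<Rightarrow> bool" where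
  "is_base_for T B \<longleftrightarrow> (\<forall>b\<in>B. openin T b) \<and>
     (\<forall>U. openin T U \<longrightarrow> (\<exists>C. C \<subseteq> B \<and> U = \<Union>C))"

text \<open>A strategy for player B in the Choquet game maps the list of player A's
moves so far [U_0, ..., U_n] to B's answer V_n (B's own earlier moves are
determined by the strategy).\<close>
definition choquet_answer :: "('a set list \<Rightarrow> 'a set) \<Rightarrow> (nat \<Rightarrow> 'a set) \<Rightarrow> nat \<Rightarrow> 'a set" where
  "choquet_answer \<sigma> U n = \<sigma> (map U [0..<Suc n])"

definition choquet_legal_upto :: "'a topology \<Rightarrow> ('a set list \<Rightarrow> 'a set) \<Rightarrow> (nat \<Rightarrow> 'a set) \<Rightarrow> nat \<Rightarrow> bool" where
  "choquet_legal_upto T \<sigma> U n \<longleftrightarrow>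
     (\<forall>k\<le>n. openin T (U k) \<and> U k \<noteq> {} \<and>
        (0 < k \<longrightarrow> U k \<subseteq> choquet_answer \<sigma> U (k - 1)))"

definition choquet_winning_strategy_B :: "'a topology \<Rightarrow> ('a set list \<Rightarrow> 'a set) \<Rightarrow> bool" where
  "choquet_winning_strategy_B T \<sigma> \<longleftrightarrow>
     (\<forall>U n. choquet_legal_upto T \<sigma> U n \<longrightarrow>
        openin T (choquet_answer \<sigma> U n) \<and> choquet_answer \<sigma> U n \<noteq> {} \<and>
        choquet_answer \<sigma> U n \<subseteq> U n) \<and>
     (\<forall>U. (\<forall>n. choquet_legal_upto T \<sigma> U n) \<longrightarrow>
        (\<Inter>n. choquet_answer \<sigma> U n) \<noteq> {})"

definition choquet_space :: "'a topology \<Rightarrow> bool" where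
  "choquet_space T \<longleftrightarrow> (\<exists>\<sigma>. choquet_winning_strategy_B T \<sigma>)"

end

theory Submission
  imports Defs "HOL-Library.Equipollence"
begin

text \<open>Player B can replay the game in a coarser topology generated by a family C of
basic sets: each move of A is shrunk to a nonempty member of C, the winning strategy
in T is consulted, and its answer is again shrunk to a member of C. This works as soon
as C is closed under finite intersections (so that C is a \<pi>-base of the topology
it generates) and contains a basic subset of every answer the strategy gives to
finite sequences from C. These are finitary closure conditions, so a
Loewenheim--Skolem closure of B0 has size at most |B0| + \<aleph>_0.\<close>

context includes cardinal_syntax
begin

lemma lepoll_iff_card_of_ordLeq: "A \<lesssim> B \<longleftrightarrow> |A| \<le>o |B|"
  unfolding lepoll_def card_of_ordLeq[symmetric] by blast

lemma Un_lepoll_infinite: "infinite K \<Longrightarrow> A \<lesssim> K \<Longrightarrow> B \<lesssim> K \<Longrightarrow> A \<union> B \<lesssim> K"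
  unfolding lepoll_iff_card_of_ordLeq
  by (rule card_of_Un_ordLeq_infinite_Field) (auto simp: card_of_Card_order card_of_card_order_on Field_card_of)

lemma Times_lepoll_infinite: "infinite K \<Longrightarrow> A \<lesssim> K \<Longrightarrow> B \<lesssim> K \<Longrightarrow> A \<times> B \<lesssim> K"
  unfolding lepoll_iff_card_of_ordLeq
  by (rule card_of_Times_ordLeq_infinite_Field) (auto simp: card_of_Card_order card_of_card_order_on Field_card_of)

lemma UN_lepoll_infinite:
  "infinite K \<Longrightarrow> I \<lesssim> K \<Longrightarrow> (\<And>i. i \<in> I \<Longrightarrow> A i \<lesssim> K) \<Longrightarrow> (\<Union>i\<in>I. A i) \<lesssim> K"
  unfolding lepoll_iff_card_of_ordLeq by (intro card_of_UNION_ordLeq_infinite) auto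

end

lemma countable_lepoll_infinite:
  assumes "countable A" "infinite K" shows "A \<lesssim> K"
proof -
  have "A \<lesssim> (UNIV :: nat set)" using assms(1) by (auto simp: countable_def lepoll_def)
  then show ?thesis using assms(2) infinite_le_lepoll lepoll_trans by blast
qed

lemma lists_lepoll_infinite:
  assumes K: "infinite K" and A: "A \<lesssim> K"
  shows "lists A \<lesssim> K"
proof -
  define L where "L n = {xs \<in> lists A. length xs = n}" for n
  have "L n \<lesssim> K" for n
  proof (induction n)
    case 0
    have "L 0 = {[]}" by (auto simp: L_def)
    then show ?case using K by (simp add: finite_lepoll_infinite)
  next
    case (Suc n)
    have "L (Suc n) \<subseteq> (\<lambda>(a, xs). a # xs) ` (A \<times> L n)"
      by (auto simp: L_def length_Suc_conv image_iff)
    then have "L (Suc n) \<lesssim> A \<times> L n" by (rule subset_image_lepoll)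
    also have "A \<times> L n \<lesssim> K" using K A Suc.IH by (rule Times_lepoll_infinite)
    finally show ?case .
  qed
  moreover have "lists A = (\<Union>n. L n)" by (auto simp: L_def)
  ultimately show ?thesis
    using K infinite_le_lepoll by (metis UN_lepoll_infinite)
qed

lemma finite_subset_UN_incseq:
  fixes C :: "nat \<Rightarrow> 'a set"
  assumes "incseq C" "finite A" "A \<subseteq> (\<Union>k. C k)"
  obtains k where "A \<subseteq> C k"
proof -
  have "C i \<subseteq> C j \<or> C j \<subseteq> C i" for i j
    using \<open>incseq C\<close> nat_le_linear by (metis incseq_def)
  then have "subset.chain UNIV (range C)" by (auto simp: subset.chain_def)
  moreover have "A \<subseteq> \<Union>(range C)" "range C \<noteq> {}" using assms(3) by auto
  ultimately obtain B where "B \<in> range C" "A \<subseteq> B"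
    using finite_subset_Union_chain[OF assms(2)] by metis
  then show thesis using that by blast
qed

lemma exists_closed_subset_lepoll:
  fixes F :: "'a list \<Rightarrow> 'a set"
  assumes K: "infinite K" and A: "A \<lesssim> K" "A \<subseteq> D"
    and F_closed: "\<And>ws. set ws \<subseteq> D \<Longrightarrow> F ws \<subseteq> D"
    and F_countable: "\<And>ws. countable (F ws)"
  shows "\<exists>C. A \<subseteq> C \<and> C \<subseteq> D \<and> C \<lesssim> K \<and> (\<forall>ws. set ws \<subseteq> C \<longrightarrow> F ws \<subseteq> C)"
proof -
  define stage where "stage = rec_nat A (\<lambda>_ S. S \<union> (\<Union>ws\<in>lists S. F ws))"
  have stage_0: "stage 0 = A" and stage_Suc: "stage (Suc k) = stage k \<union> (\<Union>ws\<in>lists (stage k). F ws)" for k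
    by (simp_all add: stage_def)
  define C where "C = (\<Union>k. stage k)"
  have "incseq stage" by (rule incseq_SucI) (simp add: stage_Suc)
  have "stage k \<subseteq> D" for k
  proof (induction k)
    case (Suc k)
    then have "F ws \<subseteq> D" if "ws \<in> lists (stage k)" for ws
      using that F_closed by (auto simp: lists_eq_set)
    then show ?case using Suc.IH by (auto simp: stage_Suc)
  qed (simp add: stage_0 A)
  moreover have stage_lepoll: "stage k \<lesssim> K" for k
  proof (induction k)
    case (Suc k)
    have "(\<Union>ws\<in>lists (stage k). F ws) \<lesssim> K"
      using K lists_lepoll_infinite[OF K Suc.IH] countable_lepoll_infinite[OF F_countable K]
      by (rule UN_lepoll_infinite)
    then show ?case unfolding stage_Suc using K Suc.IH by (simp add: Un_lepoll_infinite)
  qed (simp add: stage_0 A)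
  moreover have "F ws \<subseteq> C" if "set ws \<subseteq> C" for ws
  proof -
    have "set ws \<subseteq> (\<Union>k. stage k)" using that unfolding C_def .
    then obtain k where "set ws \<subseteq> stage k"
      by (rule finite_subset_UN_incseq[OF \<open>incseq stage\<close> finite_set])
    then have "ws \<in> lists (stage k)" by (simp add: lists_eq_set)
    then have "F ws \<subseteq> stage (Suc k)" unfolding stage_Suc by blast
    then show ?thesis unfolding C_def by blast
  qed
  moreover have "A \<subseteq> C" unfolding C_def using stage_0 by blast
  moreover have "C \<lesssim> K"
    unfolding C_def using K infinite_le_lepoll stage_lepoll by (blast intro: UN_lepoll_infinite)
  ultimately show ?thesis unfolding C_def by blast
qed

lemma generate_topology_on_basic_nbhd:
  assumes Int_closed: "\<And>a b. a \<in> S \<Longrightarrow> b \<in> S \<Longrightarrow> a \<inter> b \<in> S"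
  shows "generate_topology_on S U \<Longrightarrow> x \<in> U \<Longrightarrow> \<exists>W\<in>S. x \<in> W \<and> W \<subseteq> U"
proof (induction arbitrary: x rule: generate_topology_on.induct)
  case (Int a b)
  have "x \<in> a" "x \<in> b" using Int.prems by auto
  then obtain Wa Wb where "Wa \<in> S" "x \<in> Wa" "Wa \<subseteq> a" "Wb \<in> S" "x \<in> Wb" "Wb \<subseteq> b"
    using Int.IH by metis
  then show ?case by (intro bexI[of _ "Wa \<inter> Wb"] Int_closed) auto
next
  case (UN K)
  obtain k where k: "k \<in> K" "x \<in> k" using UN.prems by (rule UnionE)
  then obtain W where "W \<in> S" "x \<in> W" "W \<subseteq> k" using UN.IH by metis
  then show ?case using k by blast
next
  case (Basis s)
  then show ?case by blast
qed simp

lemma openin_topology_generated_by_contains_basic: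
  assumes "\<And>a b. a \<in> S \<Longrightarrow> b \<in> S \<Longrightarrow> a \<inter> b \<in> S"
    and "openin (topology_generated_by S) V" "V \<noteq> {}"
  shows "\<exists>W\<in>S. W \<noteq> {} \<and> W \<subseteq> V"
  using generate_topology_on_basic_nbhd[OF assms(1) openin_topology_generated_by[OF assms(2)]]
    assms(3) by blast

lemma is_base_for_contains_basic:
  assumes "is_base_for T B" "openin T V" "V \<noteq> {}"
  shows "\<exists>W\<in>B. W \<noteq> {} \<and> W \<subseteq> V"
proof -
  obtain C where "C \<subseteq> B" "V = \<Union>C" using assms(1,2) unfolding is_base_for_def by blast
  then show ?thesis using assms(3) by blast
qed

lemma choquet_legal_upto_0:
  "choquet_legal_upto T \<sigma> U 0 \<longleftrightarrow> openin T (U 0) \<and> U 0 \<noteq> {}"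
  by (simp add: choquet_legal_upto_def)

lemma choquet_legal_upto_Suc:
  "choquet_legal_upto T \<sigma> U (Suc n) \<longleftrightarrow> choquet_legal_upto T \<sigma> U n \<and>
     openin T (U (Suc n)) \<and> U (Suc n) \<noteq> {} \<and> U (Suc n) \<subseteq> choquet_answer \<sigma> U n"
  unfolding choquet_legal_upto_def by (auto simp: le_Suc_eq)

lemma choquet_legal_uptoD:
  "choquet_legal_upto T \<sigma> U n \<Longrightarrow> k \<le> n \<Longrightarrow> openin T (U k) \<and> U k \<noteq> {}"
  by (simp add: choquet_legal_upto_def)

locale choquet_transfer =
  fixes T T' :: "'a topology" and \<sigma> :: "'a set list \<Rightarrow> 'a set" and S :: "'a set set"
  assumes winning: "choquet_winning_strategy_B T \<sigma>"
    and openin_S: "\<And>W. W \<in> S \<Longrightarrow> openin T W"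
    and openin'_S: "\<And>W. W \<in> S \<Longrightarrow> openin T' W"
    and S_inside_openin': "\<And>V. openin T' V \<Longrightarrow> V \<noteq> {} \<Longrightarrow> \<exists>W\<in>S. W \<noteq> {} \<and> W \<subseteq> V"
    and S_inside_answer:
      "\<And>ws. set ws \<subseteq> S \<Longrightarrow> openin T (\<sigma> ws) \<Longrightarrow> \<sigma> ws \<noteq> {} \<Longrightarrow> \<exists>W\<in>S. W \<noteq> {} \<and> W \<subseteq> \<sigma> ws"
begin

definition shrink :: "'a set \<Rightarrow> 'a set" where
  "shrink V = (SOME W. W \<in> S \<and> W \<noteq> {} \<and> W \<subseteq> V)"

lemma shrink: "\<exists>W\<in>S. W \<noteq> {} \<and> W \<subseteq> V \<Longrightarrow> shrink V \<in> S \<and> shrink V \<noteq> {} \<and> shrink V \<subseteq> V"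
  unfolding shrink_def by (rule someI_ex) blast

lemma shrink_openin':
  "openin T' V \<Longrightarrow> V \<noteq> {} \<Longrightarrow> shrink V \<in> S \<and> shrink V \<noteq> {} \<and> shrink V \<subseteq> V"
  by (rule shrink[OF S_inside_openin'])

definition strategy :: "'a set list \<Rightarrow> 'a set" where
  "strategy us = shrink (\<sigma> (map shrink us))"

lemma answer_strategy: "choquet_answer strategy U n = shrink (choquet_answer \<sigma> (shrink \<circ> U) n)"
  by (simp add: choquet_answer_def strategy_def)

lemma winning_answer:
  "choquet_legal_upto T \<sigma> W n \<Longrightarrow>
     openin T (choquet_answer \<sigma> W n) \<and> choquet_answer \<sigma> W n \<noteq> {} \<and> choquet_answer \<sigma> W n \<subseteq> W n"
  using winning unfolding choquet_winning_strategy_B_def by blast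

lemma answer_strategy_in_answer:
  assumes "choquet_legal_upto T' strategy U n" "choquet_legal_upto T \<sigma> (shrink \<circ> U) n"
  shows "choquet_answer strategy U n \<in> S \<and> choquet_answer strategy U n \<noteq> {} \<and>
         choquet_answer strategy U n \<subseteq> choquet_answer \<sigma> (shrink \<circ> U) n"
proof -
  have "shrink (U k) \<in> S" if "k \<le> n" for k
    using shrink_openin' choquet_legal_uptoD[OF assms(1) that] by blast
  then have "set (map (shrink \<circ> U) [0..<Suc n]) \<subseteq> S" by auto
  then have "\<exists>W\<in>S. W \<noteq> {} \<and> W \<subseteq> choquet_answer \<sigma> (shrink \<circ> U) n"
    using S_inside_answer winning_answer[OF assms(2)] unfolding choquet_answer_def by blast
  then show ?thesis unfolding answer_strategy by (rule shrink)
qed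

lemma legal_shrink: "choquet_legal_upto T' strategy U n \<Longrightarrow> choquet_legal_upto T \<sigma> (shrink \<circ> U) n"
proof (induction n)
  case 0
  then show ?case using shrink_openin' openin_S by (auto simp: choquet_legal_upto_0)
next
  case (Suc n)
  have legal_U: "choquet_legal_upto T' strategy U n" using Suc.prems by (simp add: choquet_legal_upto_Suc)
  note legal_W = Suc.IH[OF legal_U]
  have U: "openin T' (U (Suc n))" "U (Suc n) \<noteq> {}" "U (Suc n) \<subseteq> choquet_answer strategy U n"
    using Suc.prems by (simp_all add: choquet_legal_upto_Suc)
  note W = shrink_openin'[OF U(1,2)]
  then have "shrink (U (Suc n)) \<subseteq> choquet_answer \<sigma> (shrink \<circ> U) n"
    using U(3) answer_strategy_in_answer[OF legal_U legal_W] by blast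
  then show ?case using legal_W W openin_S by (simp add: choquet_legal_upto_Suc comp_def)
qed

lemma shrink_subset: "choquet_legal_upto T' strategy U n \<Longrightarrow> shrink (U n) \<subseteq> U n"
  using choquet_legal_uptoD[of T' strategy U n n] shrink_openin' by blast

lemma winning_strategy: "choquet_winning_strategy_B T' strategy"
  unfolding choquet_winning_strategy_B_def
proof (rule conjI; intro allI impI)
  fix U n assume legal: "choquet_legal_upto T' strategy U n"
  note answer = answer_strategy_in_answer[OF legal legal_shrink[OF legal]]
  have "choquet_answer \<sigma> (shrink \<circ> U) n \<subseteq> shrink (U n)"
    using winning_answer[OF legal_shrink[OF legal]] by simp
  with shrink_subset[OF legal] answer openin'_S
  show "openin T' (choquet_answer strategy U n) \<and> choquet_answer strategy U n \<noteq> {} \<and>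
      choquet_answer strategy U n \<subseteq> U n" by blast
next
  fix U assume legal: "\<forall>n. choquet_legal_upto T' strategy U n"
  then have "(\<Inter>n. choquet_answer \<sigma> (shrink \<circ> U) n) \<noteq> {}"
    using winning legal_shrink unfolding choquet_winning_strategy_B_def by blast
  moreover have "choquet_answer \<sigma> (shrink \<circ> U) (Suc n) \<subseteq> choquet_answer strategy U n" for n
  proof -
    have legal_Suc: "choquet_legal_upto T' strategy U (Suc n)" using legal by blast
    have "choquet_answer \<sigma> (shrink \<circ> U) (Suc n) \<subseteq> shrink (U (Suc n))"
      using winning_answer[OF legal_shrink[OF legal_Suc]] by simp
    also have "\<dots> \<subseteq> U (Suc n)" by (rule shrink_subset[OF legal_Suc])
    also have "\<dots> \<subseteq> choquet_answer strategy U n"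
      using legal_Suc by (simp add: choquet_legal_upto_Suc)
    finally show ?thesis .
  qed
  ultimately show "(\<Inter>n. choquet_answer strategy U n) \<noteq> {}" by blast
qed

lemma choquet_space: "choquet_space T'"
  using winning_strategy unfolding choquet_space_def by blast

end

lemma insert_lepoll_Plus_nat: "insert x A \<lesssim> A <+> (UNIV :: nat set)"
proof -
  have inf: "infinite (A <+> (UNIV :: nat set))" by simp
  have "{x} \<lesssim> A <+> (UNIV :: nat set)" using inf by (simp add: finite_lepoll_infinite)
  moreover have "A \<lesssim> A <+> (UNIV :: nat set)" unfolding lepoll_def by (auto intro!: exI[of _ Inl])
  ultimately have "{x} \<union> A \<lesssim> A <+> (UNIV :: nat set)" by (rule Un_lepoll_infinite[OF inf])
  then show ?thesis by simp
qed

lemma is_base_for_Int_insert_topspace: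
  assumes "is_base_for T B" "\<forall>a\<in>B. \<forall>b\<in>B. a \<inter> b \<in> B"
    and "a \<in> insert (topspace T) B" "b \<in> insert (topspace T) B"
  shows "a \<inter> b \<in> insert (topspace T) B"
proof -
  have "b \<subseteq> topspace T" if "b \<in> B" for b
    using assms(1) that openin_subset unfolding is_base_for_def by blast
  then show ?thesis using assms(2-4) by (auto simp: Int_absorb1 Int_absorb2)
qed

lemma choquet_space_topology_generated_by:
  assumes "choquet_winning_strategy_B T \<sigma>"
    and openin_C: "\<And>W. W \<in> C \<Longrightarrow> openin T W"
    and Int_C: "\<And>a b. a \<in> C \<Longrightarrow> b \<in> C \<Longrightarrow> a \<inter> b \<in> C"
    and C_inside_answer:
      "\<And>ws. set ws \<subseteq> C \<Longrightarrow> openin T (\<sigma> ws) \<Longrightarrow> \<sigma> ws \<noteq> {} \<Longrightarrow> \<exists>W\<in>C. W \<noteq> {} \<and> W \<subseteq> \<sigma> ws"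
  shows "choquet_space (topology_generated_by C)"
proof -
  interpret choquet_transfer T "topology_generated_by C" \<sigma> C
  proof
    show "\<exists>W\<in>C. W \<noteq> {} \<and> W \<subseteq> V" if "openin (topology_generated_by C) V" "V \<noteq> {}" for V
      using Int_C that by (rule openin_topology_generated_by_contains_basic)
  qed (use assms topology_generated_by_Basis in auto)
  show ?thesis by (rule choquet_space)
qed

lemma exists_small_subfamily_closed:
  fixes \<sigma> :: "'a set list \<Rightarrow> 'a set"
  assumes base: "is_base_for T B" and Int_closed: "\<forall>a\<in>B. \<forall>b\<in>B. a \<inter> b \<in> B" and "B0 \<subseteq> B"
  obtains C where "insert (topspace T) B0 \<subseteq> C" "C \<subseteq> insert (topspace T) B"
    "C \<lesssim> B0 <+> (UNIV :: nat set)" "\<And>a b. a \<in> C \<Longrightarrow> b \<in> C \<Longrightarrow> a \<inter> b \<in> C"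
    "\<And>ws. set ws \<subseteq> C \<Longrightarrow> openin T (\<sigma> ws) \<Longrightarrow> \<sigma> ws \<noteq> {} \<Longrightarrow> \<exists>W\<in>C. W \<noteq> {} \<and> W \<subseteq> \<sigma> ws"
proof -
  define D where "D = insert (topspace T) B"
  define pick where "pick ws = (SOME W. W \<in> B \<and> W \<noteq> {} \<and> W \<subseteq> \<sigma> ws)" for ws
  define F where "F ws = (case ws of [a, b] \<Rightarrow> {a \<inter> b} | _ \<Rightarrow> {}) \<union>
    (if openin T (\<sigma> ws) \<and> \<sigma> ws \<noteq> {} then {pick ws} else {})" for ws
  have pick: "pick ws \<in> B \<and> pick ws \<noteq> {} \<and> pick ws \<subseteq> \<sigma> ws" if "openin T (\<sigma> ws)" "\<sigma> ws \<noteq> {}" for ws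
    unfolding pick_def by (rule someI_ex) (use is_base_for_contains_basic[OF base that] in blast)
  have "a \<inter> b \<in> D" if "a \<in> D" "b \<in> D" for a b
    using is_base_for_Int_insert_topspace[OF base Int_closed] that unfolding D_def by blast
  moreover have "pick ws \<in> D" if "openin T (\<sigma> ws)" "\<sigma> ws \<noteq> {}" for ws
    using pick[OF that] unfolding D_def by blast
  ultimately have "F ws \<subseteq> D" if "set ws \<subseteq> D" for ws
    using that by (auto simp: F_def split: list.split)
  moreover have "countable (F ws)" for ws by (simp add: F_def split: list.split)
  moreover have "insert (topspace T) B0 \<subseteq> D" using \<open>B0 \<subseteq> B\<close> unfolding D_def by blast
  moreover have "infinite (B0 <+> (UNIV :: nat set))" by simp
  ultimately obtain C where C: "insert (topspace T) B0 \<subseteq> C" "C \<subseteq> D" "C \<lesssim> B0 <+> (UNIV :: nat set)"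
      and F_C: "\<And>ws. set ws \<subseteq> C \<Longrightarrow> F ws \<subseteq> C"
    using exists_closed_subset_lepoll[OF _ insert_lepoll_Plus_nat] by metis
  show thesis
  proof (rule that[OF C(1) _ C(3)])
    show "C \<subseteq> insert (topspace T) B" using C(2) unfolding D_def .
    show "a \<inter> b \<in> C" if "a \<in> C" "b \<in> C" for a b
      using F_C[of "[a, b]"] that by (simp add: F_def)
    show "\<exists>W\<in>C. W \<noteq> {} \<and> W \<subseteq> \<sigma> ws" if "set ws \<subseteq> C" "openin T (\<sigma> ws)" "\<sigma> ws \<noteq> {}" for ws
      using F_C[OF that(1)] pick[OF that(2,3)] that(2,3) by (auto simp: F_def)
  qed
qed

theorem lemma2p7:
  fixes T :: "'a topology" and B B0 :: "'a set set"
  assumes "choquet_space T"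
    and "is_base_for T B"
    and "\<forall>a\<in>B. \<forall>b\<in>B. a \<inter> b \<in> B"
    and "B0 \<subseteq> B"
  shows "\<exists>B1. B0 \<subseteq> B1 \<and> B1 \<subseteq> B \<and> B1 \<lesssim> B0 <+> (UNIV :: nat set) \<and>
           choquet_space (topology_generated_by (insert (topspace T) B1))"
proof -
  obtain \<sigma> where \<sigma>: "choquet_winning_strategy_B T \<sigma>"
    using assms(1) unfolding choquet_space_def by blast
  obtain C where C: "insert (topspace T) B0 \<subseteq> C" "C \<subseteq> insert (topspace T) B"
      "C \<lesssim> B0 <+> (UNIV :: nat set)"
    and Int_C: "\<And>a b. a \<in> C \<Longrightarrow> b \<in> C \<Longrightarrow> a \<inter> b \<in> C"
    and C_inside_answer: "\<And>ws. set ws \<subseteq> C \<Longrightarrow> openin T (\<sigma> ws) \<Longrightarrow> \<sigma> ws \<noteq> {} \<Longrightarrow>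
      \<exists>W\<in>C. W \<noteq> {} \<and> W \<subseteq> \<sigma> ws"
    using exists_small_subfamily_closed[where \<sigma> = \<sigma>, OF assms(2-4)] by blast
  have "openin T W" if "W \<in> C" for W
    using that C(2) assms(2) unfolding is_base_for_def by auto
  then have "choquet_space (topology_generated_by C)"
    using choquet_space_topology_generated_by[OF \<sigma> _ Int_C C_inside_answer] by blast
  moreover have "insert (topspace T) (C \<inter> B) = C" using C(1,2) by blast
  moreover have "C \<inter> B \<lesssim> B0 <+> (UNIV :: nat set)"
    using C(3) by (meson Int_lower1 lepoll_trans subset_imp_lepoll)
  ultimately show ?thesis using C(1) assms(4) by (intro exI[of _ "C \<inter> B"]) auto
qed

end
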